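(* Let $\mathscr A$ and $\mathscr B$ be Hopf algebras over a field $\mathbb F$ (with comultiplications $\Delta_{\mathscr A},\Delta_{\mathscr B}$, counits $\varepsilon_{\mathscr A},\varepsilon_{\mathscr B}$ and antipodes $\sigma_{\mathscr A},\sigma_{\mathscr B}$, where $\sigma_{\mathscr B}$ is invertible), and let $\psi:\mathscr A\times\mathscr B\to\mathbb F$ be a skew-Hopf pairing. Let $\mathscr A*\mathscr B$ be the free product of the $\mathbb F$-algebras $\mathscr A$ and $\mathscr B$, and let $\mathcal I$ be the two-sided ideal of $\mathscr A*\mathscr B$ generated by the elements $$h_{a,b}:=\sum (b_2*a_2)\,\psi(a_1,b_1)-\sum (a_1*b_1)\,\psi(a_2,b_2)\qquad(a\in\mathscr A,\ b\in\mathscr B),$$ where $\Delta_{\mathscr A}(a)=\sum a_1\otimes a_2$ and $\Delta_{\mathscr B}(b)=\sum b_1\otimes b_2$. Suppose $X_{\mathscr A}\subseteq\mathscr A$ and $X_{\mathscr B}\subseteq\mathscr B$ are generating sets (as algebras) of $\mathscr A$ and $\mathscr B$ such that $\Delta_{\mathscr A}(X_{\mathscr A})\subseteq \mathrm{span}_{\mathbb F}X_{\mathscr A}\otimes\mathrm{span}_{\mathbb F}X_{\mathscr A}$ and $\Delta_{\mathscr B}(X_{\mathscr B})\subseteq \mathrm{span}_{\mathbb F}X_{\mathscr B}\otimes\mathrm{span}_{\mathbb F}X_{\mathscr B}$. Then $\mathcal I$ is generated by the elements $h_{a,b}$ with $a\in X_{\mathscr A}$ and $b\in X_{\mathscr 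B}$.
   Context: A skew-Hopf pairing of $\mathscr A$ and $\mathscr B$ is an $\mathbb F$-bilinear form $\psi:\mathscr A\times\mathscr B\to\mathbb F$ such that: (HP1) $\psi(1,b)=\varepsilon_{\mathscr B}(b)$ and $\psi(a,1)=\varepsilon_{\mathscr A}(a)$; (HP2) $\psi(a,bb')=\psi(\Delta_{\mathscr A}(a),b\otimes b')$; (HP3) $\psi(aa',b)=\psi(a\otimes a',\Delta^{\rm op}_{\mathscr B}(b))$, where $\Delta^{\rm op}_{\mathscr B}(b)=\sum b_2\otimes b_1$; (HP4) $\psi(\sigma_{\mathscr A}(a),b)=\psi(a,\sigma_{\mathscr B}^{-1}(b))$; here $\psi(a\otimes a',b\otimes b')=\psi(a,b)\psi(a',b')$. The free product $\mathscr A*\mathscr B$ is the $\mathbb F$-algebra with identity spanned by words alternating between nonidentity basis elements of $\mathscr A$ and of $\mathscr B$, with multiplication by contracted juxtaposition (it is the coproduct of $\mathscr A$ and $\mathscr B$ in the category of unital $\mathbb F$-algebras). *)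

theory Defs
  imports Complex_Main
begin

text \<open>Tensors are represented by finite lists of elementary tensors (Sweedler notation).
Two such representatives denote the same element of the tensor product over the field iff
every scalar-valued bilinear (resp. trilinear) form takes the same value on them
(the tensor product of vector spaces embeds into the dual of its dual).\<close>

definition bilinear_form :: "('k::field \<Rightarrow> 'a::ab_group_add \<Rightarrow> 'a) \<Rightarrow> ('a \<Rightarrow> 'a \<Rightarrow> 'k) \<Rightarrow> bool" where
  "bilinear_form sc \<beta> \<longleftrightarrow>
     (\<forall>c x y z. \<beta> (sc c x + y) z = c * \<beta> x z + \<beta> y z) \<and>
     (\<forall>c x y z. \<beta> x (sc c y + z) = c * \<beta> x y + \<beta> x z)"

definition trilinear_form :: "('k::field \<Rightarrow> 'a::ab_group_add \<Rightarrow> 'a) \<Rightarrow> ('a \<Rightarrow> 'a \<Rightarrow> 'a \<Rightarrow> 'k) \<Rightarrow> bool" where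
  "trilinear_form sc \<tau> \<longleftrightarrow>
     (\<forall>c x y z w. \<tau> (sc c x + y) z w = c * \<tau> x z w + \<tau> y z w) \<and>
     (\<forall>c x y z w. \<tau> w (sc c x + y) z = c * \<tau> w x z + \<tau> w y z) \<and>
     (\<forall>c x y z w. \<tau> w z (sc c x + y) = c * \<tau> w z x + \<tau> w z y)"

definition tensor_eq2 :: "('k::field \<Rightarrow> 'a::ab_group_add \<Rightarrow> 'a) \<Rightarrow> ('a \<times> 'a) list \<Rightarrow> ('a \<times> 'a) list \<Rightarrow> bool" where
  "tensor_eq2 sc t t' \<longleftrightarrow>
     (\<forall>\<beta>. bilinear_form sc \<beta> \<longrightarrow> (\<Sum>(x,y)\<leftarrow>t. \<beta> x y) = (\<Sum>(x,y)\<leftarrow>t'. \<beta> x y))"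

definition tensor_eq3 :: "('k::field \<Rightarrow> 'a::ab_group_add \<Rightarrow> 'a) \<Rightarrow> ('a \<times> 'a \<times> 'a) list \<Rightarrow> ('a \<times> 'a \<times> 'a) list \<Rightarrow> bool" where
  "tensor_eq3 sc t t' \<longleftrightarrow>
     (\<forall>\<tau>. trilinear_form sc \<tau> \<longrightarrow> (\<Sum>(x,y,z)\<leftarrow>t. \<tau> x y z) = (\<Sum>(x,y,z)\<leftarrow>t'. \<tau> x y z))"

definition hopf_algebra ::
  "('k::field \<Rightarrow> 'a::ring_1 \<Rightarrow> 'a) \<Rightarrow> ('a \<Rightarrow> ('a \<times> 'a) list) \<Rightarrow> ('a \<Rightarrow> 'k) \<Rightarrow> ('a \<Rightarrow> 'a) \<Rightarrow> bool" where
  "hopf_algebra sc \<Delta> \<epsilon> \<sigma> \<longleftrightarrow>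
     vector_space sc \<and>
     (\<forall>c x y. sc c (x * y) = sc c x * y \<and> sc c (x * y) = x * sc c y) \<and>
     \<comment> \<open>\<Delta> is a linear algebra homomorphism\<close>
     (\<forall>c x y. tensor_eq2 sc (\<Delta> (sc c x + y)) (map (\<lambda>(u,v). (sc c u, v)) (\<Delta> x) @ \<Delta> y)) \<and>
     (\<forall>x y. tensor_eq2 sc (\<Delta> (x * y)) [(x1 * y1, x2 * y2). (x1,x2) \<leftarrow> \<Delta> x, (y1,y2) \<leftarrow> \<Delta> y]) \<and>
     tensor_eq2 sc (\<Delta> 1) [(1,1)] \<and>
     \<comment> \<open>coassociativity\<close>
     (\<forall>x. tensor_eq3 sc [(y1,y2,x2). (x1,x2) \<leftarrow> \<Delta> x, (y1,y2) \<leftarrow> \<Delta> x1]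
                         [(x1,y1,y2). (x1,x2) \<leftarrow> \<Delta> x, (y1,y2) \<leftarrow> \<Delta> x2]) \<and>
     \<comment> \<open>counit: linear algebra homomorphism satisfying the counit laws\<close>
     (\<forall>c x y. \<epsilon> (sc c x + y) = c * \<epsilon> x + \<epsilon> y) \<and>
     (\<forall>x y. \<epsilon> (x * y) = \<epsilon> x * \<epsilon> y) \<and> \<epsilon> 1 = 1 \<and>
     (\<forall>x. (\<Sum>(x1,x2)\<leftarrow>\<Delta> x. sc (\<epsilon> x1) x2) = x \<and> (\<Sum>(x1,x2)\<leftarrow>\<Delta> x. sc (\<epsilon> x2) x1) = x) \<and>
     \<comment> \<open>antipode: linear, convolution inverse of the identity\<close>
     (\<forall>c x y. \<sigma> (sc c x + y) = sc c (\<sigma> x) + \<sigma> y) \<and>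
     (\<forall>x. (\<Sum>(x1,x2)\<leftarrow>\<Delta> x. \<sigma> x1 * x2) = sc (\<epsilon> x) 1 \<and> (\<Sum>(x1,x2)\<leftarrow>\<Delta> x. x1 * \<sigma> x2) = sc (\<epsilon> x) 1)"

definition skew_hopf_pairing ::
  "('k::field \<Rightarrow> 'a::ring_1 \<Rightarrow> 'a) \<Rightarrow> ('a \<Rightarrow> ('a \<times> 'a) list) \<Rightarrow> ('a \<Rightarrow> 'k) \<Rightarrow> ('a \<Rightarrow> 'a) \<Rightarrow>
   ('k \<Rightarrow> 'b::ring_1 \<Rightarrow> 'b) \<Rightarrow> ('b \<Rightarrow> ('b \<times> 'b) list) \<Rightarrow> ('b \<Rightarrow> 'k) \<Rightarrow> ('b \<Rightarrow> 'b) \<Rightarrow>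
   ('a \<Rightarrow> 'b \<Rightarrow> 'k) \<Rightarrow> bool" where
  "skew_hopf_pairing scA \<Delta>A \<epsilon>A \<sigma>A scB \<Delta>B \<epsilon>B \<sigma>B \<psi> \<longleftrightarrow>
     (\<forall>c a a' b. \<psi> (scA c a + a') b = c * \<psi> a b + \<psi> a' b) \<and>
     (\<forall>c a b b'. \<psi> a (scB c b + b') = c * \<psi> a b + \<psi> a b') \<and>
     (\<forall>b. \<psi> 1 b = \<epsilon>B b) \<and> (\<forall>a. \<psi> a 1 = \<epsilon>A a) \<and>
     (\<forall>a b b'. \<psi> a (b * b') = (\<Sum>(a1,a2)\<leftarrow>\<Delta>A a. \<psi> a1 b * \<psi> a2 b')) \<and>
     (\<forall>a a' b. \<psi> (a * a') b = (\<Sum>(b1,b2)\<leftarrow>\<Delta>B b. \<psi> a b2 * \<psi> a' b1)) \<and>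
     (\<forall>a b. \<psi> (\<sigma>A a) b = \<psi> a (inv \<sigma>B b))"

inductive_set alg_gen :: "('k::field \<Rightarrow> 'a::ring_1 \<Rightarrow> 'a) \<Rightarrow> 'a set \<Rightarrow> 'a set"
  for sc :: "'k::field \<Rightarrow> 'a::ring_1 \<Rightarrow> 'a" and X :: "'a set" where
  gen: "x \<in> X \<Longrightarrow> x \<in> alg_gen sc X"
| one: "1 \<in> alg_gen sc X"
| add: "x \<in> alg_gen sc X \<Longrightarrow> y \<in> alg_gen sc X \<Longrightarrow> x + y \<in> alg_gen sc X"
| scale: "x \<in> alg_gen sc X \<Longrightarrow> sc c x \<in> alg_gen sc X"
| mult: "x \<in> alg_gen sc X \<Longrightarrow> y \<in> alg_gen sc X \<Longrightarrow> x * y \<in> alg_gen sc X"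

text \<open>Free associative unital 'k-algebra on a set of letters 'x: elements are functions
from words to coefficients (the ideals below only contain finitely supported ones).\<close>

definition mono :: "'x list \<Rightarrow> 'x list \<Rightarrow> 'k::field" where
  "mono u w = (if w = u then 1 else 0)"

text \<open>word u * f * word v\<close>
definition wmul :: "'x list \<Rightarrow> ('x list \<Rightarrow> 'k::field) \<Rightarrow> 'x list \<Rightarrow> 'x list \<Rightarrow> 'k" where
  "wmul u f v w =
     (if length u + length v \<le> length w \<and> take (length u) w = u \<and> drop (length w - length v) w = v
      then f (drop (length u) (take (length w - length v) w)) else 0)"

inductive_set fa_ideal :: "('x list \<Rightarrow> 'k::field) set \<Rightarrow> ('x list \<Rightarrow> 'k) set"
  for S :: "('x list \<Rightarrow> 'k::field) set" where
  zero: "(\<lambda>_. 0) \<in> fa_ideal S"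
| gen: "s \<in> S \<Longrightarrow> wmul u s v \<in> fa_ideal S"
| add: "f \<in> fa_ideal S \<Longrightarrow> g \<in> fa_ideal S \<Longrightarrow> (\<lambda>w. f w + g w) \<in> fa_ideal S"
| smult: "f \<in> fa_ideal S \<Longrightarrow> (\<lambda>w. c * f w) \<in> fa_ideal S"

text \<open>Defining relations presenting the free product A * B as a quotient of the free
algebra on the letters 'a + 'b: the letters from A (resp. B) multiply as in A (resp. B),
the identities are identified with the empty word, and the letter maps are linear.\<close>

definition fp_rels :: "('k::field \<Rightarrow> 'a::ring_1 \<Rightarrow> 'a) \<Rightarrow> ('k \<Rightarrow> 'b::ring_1 \<Rightarrow> 'b)
    \<Rightarrow> (('a + 'b) list \<Rightarrow> 'k) set" where
  "fp_rels scA scB =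
     {(\<lambda>w. mono [Inl x, Inl y] w - mono [Inl (x * y)] w) | x y. True} \<union>
     {(\<lambda>w. mono [Inl 1] w - mono [] w)} \<union>
     {(\<lambda>w. mono [Inl (scA c x + y)] w - c * mono [Inl x] w - mono [Inl y] w) | c x y. True} \<union>
     {(\<lambda>w. mono [Inr x, Inr y] w - mono [Inr (x * y)] w) | x y. True} \<union>
     {(\<lambda>w. mono [Inr 1] w - mono [] w)} \<union>
     {(\<lambda>w. mono [Inr (scB c x + y)] w - c * mono [Inr x] w - mono [Inr y] w) | c x y. True}"

definition hgen :: "('a \<Rightarrow> ('a \<times> 'a) list) \<Rightarrow> ('b \<Rightarrow> ('b \<times> 'b) list) \<Rightarrow> ('a \<Rightarrow> 'b \<Rightarrow> 'k::field)
    \<Rightarrow> 'a \<Rightarrow> 'b \<Rightarrow> ('a + 'b) list \<Rightarrow> 'k" where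
  "hgen \<Delta>A \<Delta>B \<psi> a b w =
     (\<Sum>(a1,a2)\<leftarrow>\<Delta>A a. \<Sum>(b1,b2)\<leftarrow>\<Delta>B b. \<psi> a1 b1 * mono [Inr b2, Inl a2] w)
   - (\<Sum>(a1,a2)\<leftarrow>\<Delta>A a. \<Sum>(b1,b2)\<leftarrow>\<Delta>B b. \<psi> a2 b2 * mono [Inl a1, Inr b1] w)"

end

theory Submission
  imports Defs "HOL-Library.Function_Algebras"
begin

(*
  In the free product, h(a,b) = L(a,b) - R(a,b) with L(a,b) = \<Sum> \<psi>(a1,b1) b2 a2 and
  R(a,b) = \<Sum> \<psi>(a2,b2) a1 b1 (Sweedler notation).  h is bilinear, vanishes if a = 1 or b = 1,
  and the pairing axioms together with coassociativity give

    h(a a', b) = \<Sum> \<psi>(a'1,b1) h(a,b2) a'2 + \<Sum> \<psi>(a2,b2) a1 h(a',b1),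
    h(a, b b') = \<Sum> \<psi>(a1,b1) b2 h(a2,b') + \<Sum> \<psi>(a2,b'2) h(a1,b) b'1.

  So h(a,b) lies in the ideal generated by the h(x,y), x \<in> XA, y \<in> XB, for all a and b:
  induct first over the generation of b, for all a in span XA (the second identity needs the
  tensor factors a2 to stay in span XA, which is what \<Delta>(XA) \<subseteq> span XA \<otimes> span XA provides),
  then over the generation of a.

  The argument is run dually: membership in an ideal of the free algebra is detected by the
  linear functionals vanishing on it.
*)

definition sweedler :: "('a \<times> 'a) list \<Rightarrow> ('a \<Rightarrow> 'a \<Rightarrow> 'k::comm_monoid_add) \<Rightarrow> 'k" where
  "sweedler t f = (\<Sum>(x, y)\<leftarrow>t. f x y)"

lemma sweedler_Nil [simp]: "sweedler [] f = 0"
  and sweedler_Cons [simp]: "sweedler (p # t) f = f (fst p) (snd p) + sweedler t f"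
  and sweedler_append [simp]: "sweedler (t @ t') f = sweedler t f + sweedler t' f"
  by (simp_all add: sweedler_def split_beta)

lemma sweedler_zero [simp]: "sweedler t (\<lambda>x y. 0) = 0"
  by (induction t) simp_all

lemma sweedler_add: "sweedler t (\<lambda>x y. f x y + g x y) = sweedler t f + sweedler t g"
  by (induction t) (simp_all add: ac_simps)

lemma sweedler_const_mult: "c * sweedler t f = sweedler t (\<lambda>x y. c * f x y)"
  for c :: "'k::semiring_0"
  by (induction t) (simp_all add: distrib_left)

lemma sweedler_mult_const: "sweedler t f * c = sweedler t (\<lambda>x y. f x y * c)"
  for c :: "'k::semiring_0"
  by (induction t) (simp_all add: distrib_right)

lemma sweedler_swap:
  "sweedler t (\<lambda>x y. sweedler t' (f x y)) = sweedler t' (\<lambda>u v. sweedler t (\<lambda>x y. f x y u v))"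
  by (induction t) (simp_all add: sweedler_add)

lemma sweedler_cong:
  "(\<And>x y. (x, y) \<in> set t \<Longrightarrow> f x y = g x y) \<Longrightarrow> sweedler t f = sweedler t g"
  by (induction t) auto

lemma sweedler_map_pair [simp]:
  "sweedler (map (\<lambda>(x, y). (g x y, h x y)) t) f = sweedler t (\<lambda>x y. f (g x y) (h x y))"
  by (induction t) auto

lemma sweedler_product:
  "sweedler [(x1 * y1, x2 * y2). (x1, x2) \<leftarrow> s, (y1, y2) \<leftarrow> t] f
     = sweedler s (\<lambda>x1 x2. sweedler t (\<lambda>y1 y2. f (x1 * y1) (x2 * y2)))"
  by (induction s) auto

definition linear_form :: "('k::field \<Rightarrow> 'a::ab_group_add \<Rightarrow> 'a) \<Rightarrow> ('a \<Rightarrow> 'k) \<Rightarrow> bool" where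
  "linear_form sc F \<longleftrightarrow> (\<forall>c x y. F (sc c x + y) = c * F x + F y)"

lemma bilinear_form_iff:
  "bilinear_form sc \<beta> \<longleftrightarrow> (\<forall>z. linear_form sc (\<lambda>x. \<beta> x z)) \<and> (\<forall>z. linear_form sc (\<beta> z))"
  unfolding bilinear_form_def linear_form_def by auto

lemma trilinear_form_iff:
  "trilinear_form sc \<tau> \<longleftrightarrow> (\<forall>y z. linear_form sc (\<lambda>x. \<tau> x y z)) \<and>
     (\<forall>x z. linear_form sc (\<lambda>y. \<tau> x y z)) \<and> (\<forall>x y. linear_form sc (\<tau> x y))"
  unfolding trilinear_form_def linear_form_def by auto

lemma linear_form_cmult: "linear_form sc F \<Longrightarrow> linear_form sc (\<lambda>x. c * F x)"
  and linear_form_multc: "linear_form sc F \<Longrightarrow> linear_form sc (\<lambda>x. F x * c)"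
  unfolding linear_form_def by (auto simp: algebra_simps)

lemma linear_form_sweedler:
  "(\<And>u v. (u, v) \<in> set t \<Longrightarrow> linear_form sc (\<lambda>x. f x u v)) \<Longrightarrow> linear_form sc (\<lambda>x. sweedler t (f x))"
  unfolding linear_form_def by (induction t) (auto simp: algebra_simps)

context vector_space
begin

lemma linear_form_zero: "linear_form scale F \<Longrightarrow> F 0 = 0"
  unfolding linear_form_def by (metis add_cancel_left_left mult_1 scale_one)

lemma linear_form_scale: "linear_form scale F \<Longrightarrow> F (scale c x) = c * F x"
  using linear_form_zero unfolding linear_form_def by (metis add.right_neutral)

lemma linear_form_add: "linear_form scale F \<Longrightarrow> F (x + y) = F x + F y"
  unfolding linear_form_def by (metis mult_1 scale_one)

lemma linear_form_diff: "linear_form scale F \<Longrightarrow> F (x - y) = F x - F y"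
  unfolding linear_form_def
  by (metis add.commute diff_conv_add_uminus mult_minus1 scale_minus_left scale_one)

lemma linear_form_sum_scale:
  "linear_form scale F \<Longrightarrow>
     F (\<Sum>(x, y)\<leftarrow>t. scale (g x y) (h x y)) = sweedler t (\<lambda>x y. g x y * F (h x y))"
  by (induction t) (auto simp: linear_form_zero linear_form_add linear_form_scale)

lemma linear_form_eq_on_span:
  assumes "linear_form scale F" "linear_form scale G" "\<And>x. x \<in> X \<Longrightarrow> F x = G x" "a \<in> span X"
  shows "F a = G a"
  using assms(4)
proof (induction rule: span_induct_alt)
  case base then show ?case using assms(1,2) by (simp add: linear_form_zero)
next
  case (step c x y) then show ?case using assms(1-3) by (simp add: linear_form_def)
qed

lemma separating_linear_form:
  assumes "subspace I" "f \<notin> I"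
  shows "\<exists>\<phi>. linear_form scale \<phi> \<and> (\<forall>g\<in>I. \<phi> g = 0) \<and> \<phi> f = 1"
proof -
  interpret vector_space_pair scale "(*) :: 'a \<Rightarrow> 'a \<Rightarrow> 'a"
    by unfold_locales (simp_all add: algebra_simps)
  obtain B where B: "B \<subseteq> I" "independent B" "I \<subseteq> span B"
    using maximal_independent_subset by blast
  have "span B = I" using B assms(1) span_minimal by blast
  then have "independent (insert f B)"
    using B(2) assms(2) independent_insertI by blast
  then obtain \<phi> where \<phi>: "Vector_Spaces.linear scale (*) \<phi>"
    "\<forall>x\<in>insert f B. \<phi> x = (if x = f then 1 else 0)"
    using linear_independent_extend[of "insert f B" "\<lambda>x. if x = f then 1 else 0"] by blast
  interpret \<phi>: Vector_Spaces.linear scale "(*)" \<phi> by (rule \<phi>(1))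
  have "linear_form scale \<phi>" unfolding linear_form_def by (simp add: \<phi>.add \<phi>.scale)
  moreover have "\<phi> x = 0" if "x \<in> B" for x
    using \<phi>(2) B(1) assms(2) that by auto
  then have "\<phi> g = 0" if "g \<in> I" for g
    using \<phi>.eq_0_on_span \<open>span B = I\<close> that by blast
  ultimately show ?thesis using \<phi>(2) by auto
qed

end

lemma sweedler_tensor_eq2:
  "tensor_eq2 sc t t' \<Longrightarrow> bilinear_form sc \<beta> \<Longrightarrow> sweedler t \<beta> = sweedler t' \<beta>"
  unfolding tensor_eq2_def sweedler_def by (simp add: case_prod_beta')

locale hopf =
  fixes sc :: "'k::field \<Rightarrow> 'a::ring_1 \<Rightarrow> 'a" and \<Delta> :: "'a \<Rightarrow> ('a \<times> 'a) list"
    and \<epsilon> :: "'a \<Rightarrow> 'k" and \<sigma> :: "'a \<Rightarrow> 'a"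
  assumes hopf_algebra: "hopf_algebra sc \<Delta> \<epsilon> \<sigma>"
begin

sublocale vector_space sc
  using hopf_algebra by (simp add: hopf_algebra_def)

lemma linear_form_comult:
  assumes "bilinear_form sc \<beta>" shows "linear_form sc (\<lambda>x. sweedler (\<Delta> x) \<beta>)"
proof -
  have "sweedler (map (\<lambda>(u, v). (sc c u, v)) t) \<beta> = c * sweedler t \<beta>" for c t
    using assms linear_form_scale[of "\<lambda>x. \<beta> x _"]
    by (induction t) (auto simp: bilinear_form_iff distrib_left)
  moreover have "sweedler (\<Delta> (sc c x + y)) \<beta> = sweedler (map (\<lambda>(u, v). (sc c u, v)) (\<Delta> x) @ \<Delta> y) \<beta>"
    for c x y
    using hopf_algebra by (intro sweedler_tensor_eq2[OF _ assms]) (simp add: hopf_algebra_def)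
  ultimately show ?thesis
    unfolding linear_form_def by simp
qed

lemma sweedler_comult_mult:
  "bilinear_form sc \<beta> \<Longrightarrow>
     sweedler (\<Delta> (x * y)) \<beta>
       = sweedler (\<Delta> x) (\<lambda>x1 x2. sweedler (\<Delta> y) (\<lambda>y1 y2. \<beta> (x1 * y1) (x2 * y2)))"
  using hopf_algebra sweedler_tensor_eq2[of sc "\<Delta> (x * y)" _ \<beta>]
  by (simp add: hopf_algebra_def flip: sweedler_product)

lemma sweedler_comult_one: "bilinear_form sc \<beta> \<Longrightarrow> sweedler (\<Delta> 1) \<beta> = \<beta> 1 1"
  using hopf_algebra sweedler_tensor_eq2[of sc "\<Delta> 1" "[(1, 1)]" \<beta>] by (simp add: hopf_algebra_def)

lemma sweedler_coassoc:
  assumes "trilinear_form sc \<tau>"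
  shows "sweedler (\<Delta> x) (\<lambda>x1 x2. sweedler (\<Delta> x1) (\<lambda>y1 y2. \<tau> y1 y2 x2))
       = sweedler (\<Delta> x) (\<lambda>x1 x2. sweedler (\<Delta> x2) (\<lambda>y1 y2. \<tau> x1 y1 y2))"
proof -
  have sums: "(\<Sum>(y1, y2, x2)\<leftarrow>[(y1, y2, x2). (x1, x2) \<leftarrow> t, (y1, y2) \<leftarrow> \<Delta> x1]. \<tau> y1 y2 x2)
      = sweedler t (\<lambda>x1 x2. sweedler (\<Delta> x1) (\<lambda>y1 y2. \<tau> y1 y2 x2))"
    "(\<Sum>(x1, y1, y2)\<leftarrow>[(x1, y1, y2). (x1, x2) \<leftarrow> t, (y1, y2) \<leftarrow> \<Delta> x2]. \<tau> x1 y1 y2)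
      = sweedler t (\<lambda>x1 x2. sweedler (\<Delta> x2) (\<lambda>y1 y2. \<tau> x1 y1 y2))" for t
    by (induction t) (simp_all add: sweedler_def case_prod_beta' comp_def)
  have "tensor_eq3 sc [(y1, y2, x2). (x1, x2) \<leftarrow> \<Delta> x, (y1, y2) \<leftarrow> \<Delta> x1]
                      [(x1, y1, y2). (x1, x2) \<leftarrow> \<Delta> x, (y1, y2) \<leftarrow> \<Delta> x2]"
    using hopf_algebra by (simp add: hopf_algebra_def)
  with assms have "(\<Sum>(y1, y2, x2)\<leftarrow>[(y1, y2, x2). (x1, x2) \<leftarrow> \<Delta> x, (y1, y2) \<leftarrow> \<Delta> x1]. \<tau> y1 y2 x2)
      = (\<Sum>(x1, y1, y2)\<leftarrow>[(x1, y1, y2). (x1, x2) \<leftarrow> \<Delta> x, (y1, y2) \<leftarrow> \<Delta> x2]. \<tau> x1 y1 y2)"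
    unfolding tensor_eq3_def by blast
  then show ?thesis
    by (simp only: sums)
qed

lemma sweedler_counit:
  assumes "linear_form sc F"
  shows "sweedler (\<Delta> x) (\<lambda>x1 x2. \<epsilon> x1 * F x2) = F x"
    and "sweedler (\<Delta> x) (\<lambda>x1 x2. \<epsilon> x2 * F x1) = F x"
  using hopf_algebra linear_form_sum_scale[OF assms, of "\<lambda>x y. \<epsilon> x" "\<lambda>x y. y" "\<Delta> x"]
    linear_form_sum_scale[OF assms, of "\<lambda>x y. \<epsilon> y" "\<lambda>x y. x" "\<Delta> x"]
  unfolding hopf_algebra_def by simp_all

definition comult_in_span_tensor :: "'a set \<Rightarrow> bool" where
  "comult_in_span_tensor X \<longleftrightarrow>
     (\<forall>x\<in>X. \<exists>t. tensor_eq2 sc (\<Delta> x) t \<and> (\<forall>(u, v)\<in>set t. u \<in> span X \<and> v \<in> span X))"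

lemma sweedler_comult_cong_span:
  assumes "comult_in_span_tensor X"
    and "a \<in> span X" and \<beta>: "bilinear_form sc \<beta>" and \<gamma>: "bilinear_form sc \<gamma>"
    and eq: "\<And>u v. u \<in> span X \<Longrightarrow> v \<in> span X \<Longrightarrow> \<beta> u v = \<gamma> u v"
  shows "sweedler (\<Delta> a) \<beta> = sweedler (\<Delta> a) \<gamma>"
  using linear_form_comult[OF \<beta>] linear_form_comult[OF \<gamma>] _ \<open>a \<in> span X\<close>
proof (rule linear_form_eq_on_span)
  fix x assume "x \<in> X"
  then obtain t where t: "tensor_eq2 sc (\<Delta> x) t" "\<forall>(u, v)\<in>set t. u \<in> span X \<and> v \<in> span X"
    using assms(1) unfolding comult_in_span_tensor_def by blast
  have "sweedler (\<Delta> x) \<beta> = sweedler t \<beta>" using sweedler_tensor_eq2[OF t(1) \<beta>] .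
  also have "\<dots> = sweedler t \<gamma>" using t(2) eq by (intro sweedler_cong) auto
  also have "\<dots> = sweedler (\<Delta> x) \<gamma>" using sweedler_tensor_eq2[OF t(1) \<gamma>] ..
  finally show "sweedler (\<Delta> x) \<beta> = sweedler (\<Delta> x) \<gamma>" .
qed

end

locale skew_pairing =
  A: hopf scA \<Delta>A \<epsilon>A \<sigma>A + B: hopf scB \<Delta>B \<epsilon>B \<sigma>B
  for scA :: "'k::field \<Rightarrow> 'a::ring_1 \<Rightarrow> 'a" and \<Delta>A \<epsilon>A \<sigma>A
    and scB :: "'k \<Rightarrow> 'b::ring_1 \<Rightarrow> 'b" and \<Delta>B \<epsilon>B \<sigma>B +
  fixes \<psi> :: "'a \<Rightarrow> 'b \<Rightarrow> 'k"
  assumes pairing: "skew_hopf_pairing scA \<Delta>A \<epsilon>A \<sigma>A scB \<Delta>B \<epsilon>B \<sigma>B \<psi>"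
begin

lemma linear_form_pairing: "linear_form scA (\<lambda>a. \<psi> a b)" "linear_form scB (\<psi> a)"
  using pairing unfolding skew_hopf_pairing_def linear_form_def by auto

lemmas linear_form_intros =
  linear_form_sweedler linear_form_cmult linear_form_multc linear_form_pairing

lemma pairing_one: "\<psi> 1 b = \<epsilon>B b" "\<psi> a 1 = \<epsilon>A a"
  using pairing unfolding skew_hopf_pairing_def by auto

lemma pairing_mult_right: "\<psi> a (b * b') = sweedler (\<Delta>A a) (\<lambda>a1 a2. \<psi> a1 b * \<psi> a2 b')"
  and pairing_mult_left: "\<psi> (a * a') b = sweedler (\<Delta>B b) (\<lambda>b1 b2. \<psi> a b2 * \<psi> a' b1)"
  using pairing unfolding skew_hopf_pairing_def sweedler_def by auto

(* Pulls Sweedler sums over \<Delta>A outwards; unrestricted, sweedler_swap would loop under simp. *)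
lemmas sweedler_swap_A = sweedler_swap[where t' = "\<Delta>A z" for z]

(* A linear functional on the free algebra over the letters 'a + 'b is represented by its values M
   on words; fp_compatible M says that it factors through the free product A * B, and
   h_left M a b, h_right M a b are its values on the two sums making up h(a,b). *)

definition h_left :: "(('a + 'b) list \<Rightarrow> 'k) \<Rightarrow> 'a \<Rightarrow> 'b \<Rightarrow> 'k" where
  "h_left M a b =
     sweedler (\<Delta>A a) (\<lambda>a1 a2. sweedler (\<Delta>B b) (\<lambda>b1 b2. \<psi> a1 b1 * M [Inr b2, Inl a2]))"

definition h_right :: "(('a + 'b) list \<Rightarrow> 'k) \<Rightarrow> 'a \<Rightarrow> 'b \<Rightarrow> 'k" where
  "h_right M a b =
     sweedler (\<Delta>A a) (\<lambda>a1 a2. sweedler (\<Delta>B b) (\<lambda>b1 b2. \<psi> a2 b2 * M [Inl a1, Inr b1]))"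

definition fp_relations_hold :: "(('a + 'b) list \<Rightarrow> 'k) \<Rightarrow> bool" where
  "fp_relations_hold M \<longleftrightarrow>
     (\<forall>x y. M [Inl x, Inl y] = M [Inl (x * y)]) \<and> M [Inl 1] = M [] \<and>
     (\<forall>c x y. M [Inl (scA c x + y)] = c * M [Inl x] + M [Inl y]) \<and>
     (\<forall>x y. M [Inr x, Inr y] = M [Inr (x * y)]) \<and> M [Inr 1] = M [] \<and>
     (\<forall>c x y. M [Inr (scB c x + y)] = c * M [Inr x] + M [Inr y])"

definition fp_compatible :: "(('a + 'b) list \<Rightarrow> 'k) \<Rightarrow> bool" where
  "fp_compatible M \<longleftrightarrow> (\<forall>u v. fp_relations_hold (\<lambda>w. M (u @ w @ v)))"

lemma fp_compatible_context: "fp_compatible M \<Longrightarrow> fp_compatible (\<lambda>w. M (u @ w @ v))"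
  unfolding fp_compatible_def
proof (intro allI impI)
  fix u' v' assume "\<forall>u v. fp_relations_hold (\<lambda>w. M (u @ w @ v))"
  then have "fp_relations_hold (\<lambda>w. M ((u @ u') @ w @ v' @ v))" by blast
  then show "fp_relations_hold (\<lambda>w. M (u @ (u' @ w @ v') @ v))" by simp
qed

lemma fp_compatibleD:
  assumes "fp_compatible M"
  shows "M (u @ Inl x # Inl y # v) = M (u @ Inl (x * y) # v)"
    and "M (u @ Inr x' # Inr y' # v) = M (u @ Inr (x' * y') # v)"
    and "M (u @ Inl 1 # v) = M (u @ v)"
    and "M (u @ Inr 1 # v) = M (u @ v)"
    and "linear_form scA (\<lambda>x. M (u @ Inl x # v))"
    and "linear_form scB (\<lambda>x. M (u @ Inr x # v))"
  using spec[OF spec[OF assms[unfolded fp_compatible_def], of u], of v]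
  unfolding fp_relations_hold_def linear_form_def by simp_all

(* Instances for explicit short prefixes, which unify when used as introduction rules. *)
lemma fp_compatible_linear:
  assumes "fp_compatible M"
  shows "linear_form scA (\<lambda>x. M (Inl x # v))" "linear_form scA (\<lambda>x. M (p # Inl x # v))"
    "linear_form scA (\<lambda>x. M (p # q # Inl x # v))"
    "linear_form scB (\<lambda>x. M (Inr x # v))" "linear_form scB (\<lambda>x. M (p # Inr x # v))"
    "linear_form scB (\<lambda>x. M (p # q # Inr x # v))"
  using fp_compatibleD(5,6)[OF assms, of "[]"] fp_compatibleD(5,6)[OF assms, of "[p]"]
    fp_compatibleD(5,6)[OF assms, of "[p, q]"]
  by simp_all

lemma linear_form_h:
  assumes M: "fp_compatible M"
  shows "linear_form scA (\<lambda>a. h_left M a b)" "linear_form scA (\<lambda>a. h_right M a b)"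
    and "linear_form scB (h_left M a)" "linear_form scB (h_right M a)"
proof -
  note lin = linear_form_intros fp_compatible_linear[OF M]
  show "linear_form scA (\<lambda>a. h_left M a b)" "linear_form scA (\<lambda>a. h_right M a b)"
    unfolding h_left_def h_right_def
    by (auto simp: bilinear_form_iff intro!: A.linear_form_comult lin)
  have "linear_form scB (\<lambda>b. sweedler (\<Delta>B b) (\<lambda>b1 b2. \<psi> a1 b1 * M [Inr b2, Inl a2]))"
    "linear_form scB (\<lambda>b. sweedler (\<Delta>B b) (\<lambda>b1 b2. \<psi> a2 b2 * M [Inl a1, Inr b1]))" for a1 a2
    by (auto simp: bilinear_form_iff intro!: B.linear_form_comult lin)
  then show "linear_form scB (h_left M a)" "linear_form scB (h_right M a)"
    unfolding h_left_def h_right_def by (auto intro!: linear_form_sweedler)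
qed

lemma h_unit:
  assumes M: "fp_compatible M"
  shows "h_left M a 1 = M [Inl a]" "h_right M a 1 = M [Inl a]"
    and "h_left M 1 b = M [Inr b]" "h_right M 1 b = M [Inr b]"
proof -
  note rel = fp_compatibleD[OF M] and lin = linear_form_intros fp_compatible_linear[OF M]
    and counit = A.sweedler_counit[OF fp_compatible_linear(1)[OF M]]
      B.sweedler_counit[OF fp_compatible_linear(4)[OF M]]
  show "h_left M a 1 = M [Inl a]"
    unfolding h_left_def using rel(4)[of "[]" "[Inl _]"]
    by (subst B.sweedler_comult_one) (auto simp: bilinear_form_iff pairing_one counit intro!: lin)
  show "h_right M a 1 = M [Inl a]"
    unfolding h_right_def using rel(4)[of "[Inl _]" "[]"]
    by (subst B.sweedler_comult_one) (auto simp: bilinear_form_iff pairing_one counit intro!: lin)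
  show "h_left M 1 b = M [Inr b]"
    unfolding h_left_def using rel(3)[of "[Inr _]" "[]"]
    by (subst A.sweedler_comult_one) (auto simp: bilinear_form_iff pairing_one counit intro!: lin)
  show "h_right M 1 b = M [Inr b]"
    unfolding h_right_def using rel(3)[of "[]" "[Inr _]"]
    by (subst A.sweedler_comult_one) (auto simp: bilinear_form_iff pairing_one counit intro!: lin)
qed

lemma h_left_mult_fst:
  assumes M: "fp_compatible M"
  shows "h_left M (a * a') b = sweedler (\<Delta>A a') (\<lambda>a1' a2'. sweedler (\<Delta>B b) (\<lambda>b1 b2.
           \<psi> a1' b1 * h_left (\<lambda>w. M (w @ [Inl a2'])) a b2))"
    (is "_ = ?rhs")
proof -
  note lin = linear_form_intros fp_compatible_linear[OF M]
  have "h_left M (a * a') b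
      = sweedler (\<Delta>A a) (\<lambda>a1 a2. sweedler (\<Delta>A a') (\<lambda>a1' a2'. sweedler (\<Delta>B b) (\<lambda>b1 b2.
          \<psi> (a1 * a1') b1 * M [Inr b2, Inl (a2 * a2')])))"
    unfolding h_left_def
    by (subst A.sweedler_comult_mult) (auto simp: bilinear_form_iff intro!: lin)
  also have "\<dots> = sweedler (\<Delta>A a) (\<lambda>a1 a2. sweedler (\<Delta>A a') (\<lambda>a1' a2'. sweedler (\<Delta>B b) (\<lambda>b1 b2.
          sweedler (\<Delta>B b1) (\<lambda>c1 c2. \<psi> a1 c2 * \<psi> a1' c1 * M [Inr b2, Inl a2, Inl a2']))))"
    using fp_compatibleD(1)[OF M, of "[Inr _]" _ _ "[]"]
    by (simp add: pairing_mult_left sweedler_mult_const)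
  also have "\<dots> = sweedler (\<Delta>A a) (\<lambda>a1 a2. sweedler (\<Delta>A a') (\<lambda>a1' a2'. sweedler (\<Delta>B b) (\<lambda>b1 b2.
          sweedler (\<Delta>B b2) (\<lambda>c1 c2. \<psi> a1 c1 * \<psi> a1' b1 * M [Inr c2, Inl a2, Inl a2']))))"
    by (subst B.sweedler_coassoc) (auto simp: trilinear_form_iff intro!: lin)
  also have "\<dots> = ?rhs"
    unfolding h_left_def by (simp add: sweedler_const_mult ac_simps sweedler_swap[of "\<Delta>A a"])
  finally show ?thesis .
qed

lemma h_right_mult_fst:
  assumes M: "fp_compatible M"
  shows "h_right M (a * a') b = sweedler (\<Delta>A a) (\<lambda>a1 a2. sweedler (\<Delta>B b) (\<lambda>b1 b2.
           \<psi> a2 b2 * h_right (\<lambda>w. M (Inl a1 # w)) a' b1))"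
    (is "_ = ?rhs")
proof -
  note lin = linear_form_intros fp_compatible_linear[OF M]
  have "h_right M (a * a') b
      = sweedler (\<Delta>A a) (\<lambda>a1 a2. sweedler (\<Delta>A a') (\<lambda>a1' a2'. sweedler (\<Delta>B b) (\<lambda>b1 b2.
          \<psi> (a2 * a2') b2 * M [Inl (a1 * a1'), Inr b1])))"
    unfolding h_right_def
    by (subst A.sweedler_comult_mult) (auto simp: bilinear_form_iff intro!: lin)
  also have "\<dots> = sweedler (\<Delta>A a) (\<lambda>a1 a2. sweedler (\<Delta>A a') (\<lambda>a1' a2'. sweedler (\<Delta>B b) (\<lambda>b1 b2.
          sweedler (\<Delta>B b2) (\<lambda>c1 c2. \<psi> a2 c2 * \<psi> a2' c1 * M [Inl a1, Inl a1', Inr b1]))))"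
    using fp_compatibleD(1)[OF M, of "[]" _ _ "[Inr _]"]
    by (simp add: pairing_mult_left sweedler_mult_const)
  also have "\<dots> = sweedler (\<Delta>A a) (\<lambda>a1 a2. sweedler (\<Delta>A a') (\<lambda>a1' a2'. sweedler (\<Delta>B b) (\<lambda>b1 b2.
          sweedler (\<Delta>B b1) (\<lambda>c1 c2. \<psi> a2 b2 * \<psi> a2' c2 * M [Inl a1, Inl a1', Inr c1]))))"
    by (subst B.sweedler_coassoc) (auto simp: trilinear_form_iff intro!: lin)
  also have "\<dots> = ?rhs"
    unfolding h_right_def by (simp add: sweedler_const_mult ac_simps sweedler_swap[of "\<Delta>A a'"])
  finally show ?thesis .
qed

lemma h_mult_fst_exchange:
  assumes M: "fp_compatible M"
  shows "sweedler (\<Delta>A a') (\<lambda>a1' a2'. sweedler (\<Delta>B b) (\<lambda>b1 b2.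
           \<psi> a1' b1 * h_right (\<lambda>w. M (w @ [Inl a2'])) a b2))
       = sweedler (\<Delta>A a) (\<lambda>a1 a2. sweedler (\<Delta>B b) (\<lambda>b1 b2.
           \<psi> a2 b2 * h_left (\<lambda>w. M (Inl a1 # w)) a' b1))"
    (is "?lhs = ?rhs")
proof -
  have "?lhs = sweedler (\<Delta>A a') (\<lambda>a1' a2'. sweedler (\<Delta>A a) (\<lambda>a1 a2. sweedler (\<Delta>B b) (\<lambda>b1 b2.
          sweedler (\<Delta>B b2) (\<lambda>c1 c2. \<psi> a1' b1 * \<psi> a2 c2 * M [Inl a1, Inr c1, Inl a2']))))"
    unfolding h_right_def by (simp add: sweedler_const_mult ac_simps sweedler_swap[of "\<Delta>A a"])
  also have "\<dots> = sweedler (\<Delta>A a') (\<lambda>a1' a2'. sweedler (\<Delta>A a) (\<lambda>a1 a2. sweedler (\<Delta>B b) (\<lambda>b1 b2.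
          sweedler (\<Delta>B b1) (\<lambda>c1 c2. \<psi> a1' c1 * \<psi> a2 b2 * M [Inl a1, Inr c2, Inl a2']))))"
    by (subst B.sweedler_coassoc)
      (auto simp: trilinear_form_iff intro!: linear_form_intros fp_compatible_linear[OF M])
  also have "\<dots> = ?rhs"
    unfolding h_left_def by (simp add: sweedler_const_mult ac_simps sweedler_swap[of "\<Delta>A a'"])
  finally show ?thesis .
qed

lemma h_left_mult_snd:
  assumes M: "fp_compatible M"
  shows "h_left M a (b * b') = sweedler (\<Delta>A a) (\<lambda>a1 a2. sweedler (\<Delta>B b) (\<lambda>b1 b2.
           \<psi> a1 b1 * h_left (\<lambda>w. M (Inr b2 # w)) a2 b'))"
    (is "_ = ?rhs")
proof -
  note lin = linear_form_intros fp_compatible_linear[OF M]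
  have "h_left M a (b * b')
      = sweedler (\<Delta>A a) (\<lambda>a1 a2. sweedler (\<Delta>B b) (\<lambda>b1 b2. sweedler (\<Delta>B b') (\<lambda>b1' b2'.
          \<psi> a1 (b1 * b1') * M [Inr (b2 * b2'), Inl a2])))"
    unfolding h_left_def
    by (subst B.sweedler_comult_mult) (auto simp: bilinear_form_iff intro!: lin)
  also have "\<dots> = sweedler (\<Delta>A a) (\<lambda>a1 a2. sweedler (\<Delta>A a1) (\<lambda>c1 c2. sweedler (\<Delta>B b) (\<lambda>b1 b2.
          sweedler (\<Delta>B b') (\<lambda>b1' b2'. \<psi> c1 b1 * \<psi> c2 b1' * M [Inr b2, Inr b2', Inl a2]))))"
    using fp_compatibleD(2)[OF M, of "[]" _ _ "[Inl _]"]
    by (simp add: pairing_mult_right sweedler_mult_const sweedler_swap_A)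
  also have "\<dots> = sweedler (\<Delta>A a) (\<lambda>a1 a2. sweedler (\<Delta>A a2) (\<lambda>c1 c2. sweedler (\<Delta>B b) (\<lambda>b1 b2.
          sweedler (\<Delta>B b') (\<lambda>b1' b2'. \<psi> a1 b1 * \<psi> c1 b1' * M [Inr b2, Inr b2', Inl c2]))))"
    by (subst A.sweedler_coassoc) (auto simp: trilinear_form_iff intro!: lin)
  also have "\<dots> = ?rhs"
    unfolding h_left_def by (simp add: sweedler_const_mult ac_simps sweedler_swap_A)
  finally show ?thesis .
qed

lemma h_right_mult_snd:
  assumes M: "fp_compatible M"
  shows "h_right M a (b * b') = sweedler (\<Delta>A a) (\<lambda>a1 a2. sweedler (\<Delta>B b') (\<lambda>b1' b2'.
           \<psi> a2 b2' * h_right (\<lambda>w. M (w @ [Inr b1'])) a1 b))"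
    (is "_ = ?rhs")
proof -
  note lin = linear_form_intros fp_compatible_linear[OF M]
  have "h_right M a (b * b')
      = sweedler (\<Delta>A a) (\<lambda>a1 a2. sweedler (\<Delta>B b) (\<lambda>b1 b2. sweedler (\<Delta>B b') (\<lambda>b1' b2'.
          \<psi> a2 (b2 * b2') * M [Inl a1, Inr (b1 * b1')])))"
    unfolding h_right_def
    by (subst B.sweedler_comult_mult) (auto simp: bilinear_form_iff intro!: lin)
  also have "\<dots> = sweedler (\<Delta>A a) (\<lambda>a1 a2. sweedler (\<Delta>A a2) (\<lambda>c1 c2. sweedler (\<Delta>B b) (\<lambda>b1 b2.
          sweedler (\<Delta>B b') (\<lambda>b1' b2'. \<psi> c1 b2 * \<psi> c2 b2' * M [Inl a1, Inr b1, Inr b1']))))"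
    using fp_compatibleD(2)[OF M, of "[Inl _]" _ _ "[]"]
    by (simp add: pairing_mult_right sweedler_mult_const sweedler_swap_A)
  also have "\<dots> = sweedler (\<Delta>A a) (\<lambda>a1 a2. sweedler (\<Delta>A a1) (\<lambda>c1 c2. sweedler (\<Delta>B b) (\<lambda>b1 b2.
          sweedler (\<Delta>B b') (\<lambda>b1' b2'. \<psi> c2 b2 * \<psi> a2 b2' * M [Inl c1, Inr b1, Inr b1']))))"
    by (subst A.sweedler_coassoc[symmetric]) (auto simp: trilinear_form_iff intro!: lin)
  also have "\<dots> = ?rhs"
    unfolding h_right_def
    by (simp add: sweedler_const_mult ac_simps sweedler_swap_A sweedler_swap[of "\<Delta>B b'"])
  finally show ?thesis .
qed

lemma h_mult_snd_exchange:
  assumes M: "fp_compatible M"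
  shows "sweedler (\<Delta>A a) (\<lambda>a1 a2. sweedler (\<Delta>B b) (\<lambda>b1 b2.
           \<psi> a1 b1 * h_right (\<lambda>w. M (Inr b2 # w)) a2 b'))
       = sweedler (\<Delta>A a) (\<lambda>a1 a2. sweedler (\<Delta>B b') (\<lambda>b1' b2'.
           \<psi> a2 b2' * h_left (\<lambda>w. M (w @ [Inr b1'])) a1 b))"
    (is "?lhs = ?rhs")
proof -
  have "?lhs = sweedler (\<Delta>A a) (\<lambda>a1 a2. sweedler (\<Delta>A a2) (\<lambda>c1 c2. sweedler (\<Delta>B b) (\<lambda>b1 b2.
          sweedler (\<Delta>B b') (\<lambda>b1' b2'. \<psi> a1 b1 * \<psi> c2 b2' * M [Inr b2, Inl c1, Inr b1']))))"
    unfolding h_right_def by (simp add: sweedler_const_mult ac_simps sweedler_swap_A)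
  also have "\<dots> = sweedler (\<Delta>A a) (\<lambda>a1 a2. sweedler (\<Delta>A a1) (\<lambda>c1 c2. sweedler (\<Delta>B b) (\<lambda>b1 b2.
          sweedler (\<Delta>B b') (\<lambda>b1' b2'. \<psi> c1 b1 * \<psi> a2 b2' * M [Inr b2, Inl c2, Inr b1']))))"
    by (subst A.sweedler_coassoc[symmetric])
      (auto simp: trilinear_form_iff intro!: linear_form_intros fp_compatible_linear[OF M])
  also have "\<dots> = ?rhs"
    unfolding h_left_def
    by (simp add: sweedler_const_mult ac_simps sweedler_swap_A sweedler_swap[of "\<Delta>B b'"])
  finally show ?thesis .
qed

definition h_compatible :: "'a set \<Rightarrow> 'b set \<Rightarrow> (('a + 'b) list \<Rightarrow> 'k) \<Rightarrow> bool" where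
  "h_compatible XA XB M \<longleftrightarrow> fp_compatible M \<and>
     (\<forall>u v. \<forall>a\<in>XA. \<forall>b\<in>XB.
        h_left (\<lambda>w. M (u @ w @ v)) a b = h_right (\<lambda>w. M (u @ w @ v)) a b)"

lemma h_compatible_context:
  assumes "h_compatible XA XB M"
  shows "h_compatible XA XB (\<lambda>w. M (u @ w @ v))"
  unfolding h_compatible_def
proof (intro conjI allI ballI)
  show "fp_compatible (\<lambda>w. M (u @ w @ v))"
    using assms fp_compatible_context unfolding h_compatible_def by blast
  fix u' v' a b assume "a \<in> XA" "b \<in> XB"
  then have "h_left (\<lambda>w. M ((u @ u') @ w @ v' @ v)) a b
      = h_right (\<lambda>w. M ((u @ u') @ w @ v' @ v)) a b"
    using assms unfolding h_compatible_def by blast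
  then show "h_left (\<lambda>w. M (u @ (u' @ w @ v') @ v)) a b
      = h_right (\<lambda>w. M (u @ (u' @ w @ v') @ v)) a b"
    by simp
qed

lemma h_compatible_Cons: "h_compatible XA XB M \<Longrightarrow> h_compatible XA XB (\<lambda>w. M (x # w))"
  and h_compatible_snoc: "h_compatible XA XB M \<Longrightarrow> h_compatible XA XB (\<lambda>w. M (w @ [x]))"
  using h_compatible_context[of XA XB M "[x]" "[]"] h_compatible_context[of XA XB M "[]" "[x]"]
  by simp_all

lemma h_compatible_fp: "h_compatible XA XB M \<Longrightarrow> fp_compatible M"
  unfolding h_compatible_def by blast

lemma h_compatible_gen:
  "h_compatible XA XB M \<Longrightarrow> a \<in> XA \<Longrightarrow> b \<in> XB \<Longrightarrow> h_left M a b = h_right M a b"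
  unfolding h_compatible_def by (drule conjunct2, drule spec[of _ "[]"], drule spec[of _ "[]"]) simp

lemma h_eq_mult_fst:
  assumes M: "h_compatible XA XB M"
    and a: "\<And>M' b. h_compatible XA XB M' \<Longrightarrow> h_left M' a b = h_right M' a b"
    and a': "\<And>M' b. h_compatible XA XB M' \<Longrightarrow> h_left M' a' b = h_right M' a' b"
  shows "h_left M (a * a') b = h_right M (a * a') b"
proof -
  note fp = h_compatible_fp[OF M]
  have "h_left M (a * a') b = sweedler (\<Delta>A a') (\<lambda>a1' a2'. sweedler (\<Delta>B b) (\<lambda>b1 b2.
           \<psi> a1' b1 * h_left (\<lambda>w. M (w @ [Inl a2'])) a b2))"
    by (rule h_left_mult_fst[OF fp])
  also have "\<dots> = sweedler (\<Delta>A a') (\<lambda>a1' a2'. sweedler (\<Delta>B b) (\<lambda>b1 b2.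
           \<psi> a1' b1 * h_right (\<lambda>w. M (w @ [Inl a2'])) a b2))"
    using a[OF h_compatible_snoc[OF M]] by simp
  also have "\<dots> = sweedler (\<Delta>A a) (\<lambda>a1 a2. sweedler (\<Delta>B b) (\<lambda>b1 b2.
           \<psi> a2 b2 * h_left (\<lambda>w. M (Inl a1 # w)) a' b1))"
    by (rule h_mult_fst_exchange[OF fp])
  also have "\<dots> = sweedler (\<Delta>A a) (\<lambda>a1 a2. sweedler (\<Delta>B b) (\<lambda>b1 b2.
           \<psi> a2 b2 * h_right (\<lambda>w. M (Inl a1 # w)) a' b1))"
    using a'[OF h_compatible_Cons[OF M]] by simp
  also have "\<dots> = h_right M (a * a') b"
    by (rule h_right_mult_fst[OF fp, symmetric])
  finally show ?thesis .
qed

lemma h_eq_mult_snd: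
  assumes span: "A.comult_in_span_tensor XA"
    and M: "h_compatible XA XB M" and "a \<in> A.span XA"
    and b: "\<And>M' a. h_compatible XA XB M' \<Longrightarrow> a \<in> A.span XA \<Longrightarrow> h_left M' a b = h_right M' a b"
    and b': "\<And>M' a. h_compatible XA XB M' \<Longrightarrow> a \<in> A.span XA \<Longrightarrow> h_left M' a b' = h_right M' a b'"
  shows "h_left M a (b * b') = h_right M a (b * b')"
proof -
  note fp = h_compatible_fp[OF M]
  have fp_Cons: "fp_compatible (\<lambda>w. M (x # w))" and fp_snoc: "fp_compatible (\<lambda>w. M (w @ [x]))" for x
    using h_compatible_fp h_compatible_Cons h_compatible_snoc M by blast+
  have "h_left M a (b * b') = sweedler (\<Delta>A a) (\<lambda>a1 a2. sweedler (\<Delta>B b) (\<lambda>b1 b2.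
           \<psi> a1 b1 * h_left (\<lambda>w. M (Inr b2 # w)) a2 b'))"
    by (rule h_left_mult_snd[OF fp])
  also have "\<dots> = sweedler (\<Delta>A a) (\<lambda>a1 a2. sweedler (\<Delta>B b) (\<lambda>b1 b2.
           \<psi> a1 b1 * h_right (\<lambda>w. M (Inr b2 # w)) a2 b'))"
    using span \<open>a \<in> A.span XA\<close> b'[OF h_compatible_Cons[OF M]]
    by (intro A.sweedler_comult_cong_span)
      (auto simp: bilinear_form_iff intro!: linear_form_intros linear_form_h[OF fp_Cons])
  also have "\<dots> = sweedler (\<Delta>A a) (\<lambda>a1 a2. sweedler (\<Delta>B b') (\<lambda>b1' b2'.
           \<psi> a2 b2' * h_left (\<lambda>w. M (w @ [Inr b1'])) a1 b))"
    by (rule h_mult_snd_exchange[OF fp])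
  also have "\<dots> = sweedler (\<Delta>A a) (\<lambda>a1 a2. sweedler (\<Delta>B b') (\<lambda>b1' b2'.
           \<psi> a2 b2' * h_right (\<lambda>w. M (w @ [Inr b1'])) a1 b))"
    using span \<open>a \<in> A.span XA\<close> b[OF h_compatible_snoc[OF M]]
    by (intro A.sweedler_comult_cong_span)
      (auto simp: bilinear_form_iff intro!: linear_form_intros linear_form_h[OF fp_snoc])
  also have "\<dots> = h_right M a (b * b')"
    by (rule h_right_mult_snd[OF fp, symmetric])
  finally show ?thesis .
qed

lemma h_eq_on_span:
  assumes genB: "alg_gen scB XB = UNIV" and span: "A.comult_in_span_tensor XA"
    and "h_compatible XA XB M" "a \<in> A.span XA"
  shows "h_left M a b = h_right M a b"
proof -
  have "b \<in> alg_gen scB XB" using genB by simp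
  then show ?thesis using assms(3,4)
  proof (induction arbitrary: M a)
    case (gen y)
    show ?case
      by (rule A.linear_form_eq_on_span[OF linear_form_h(1,2)[OF h_compatible_fp[OF gen.prems(1)]]
            h_compatible_gen[OF gen.prems(1) _ gen.hyps] gen.prems(2)])
  next
    case one
    then show ?case using h_unit[OF h_compatible_fp] by simp
  next
    case (add y y')
    then show ?case
      using linear_form_h(3,4)[OF h_compatible_fp[OF add.prems(1)]] by (simp add: B.linear_form_add)
  next
    case (scale y c)
    then show ?case
      using linear_form_h(3,4)[OF h_compatible_fp[OF scale.prems(1)]]
      by (simp add: B.linear_form_scale)
  next
    case (mult y y')
    show ?case by (rule h_eq_mult_snd[OF span mult.prems mult.IH])
  qed
qed

lemma h_eq:
  assumes genA: "alg_gen scA XA = UNIV" and genB: "alg_gen scB XB = UNIV"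
    and span: "A.comult_in_span_tensor XA" and "h_compatible XA XB M"
  shows "h_left M a b = h_right M a b"
proof -
  have "a \<in> alg_gen scA XA" using genA by simp
  then show ?thesis using assms(4)
  proof (induction arbitrary: M b)
    case (gen x)
    show ?case by (rule h_eq_on_span[OF genB span gen.prems A.span_base[OF gen.hyps]])
  next
    case one
    then show ?case using h_unit[OF h_compatible_fp] by simp
  next
    case (add x x')
    note lin = linear_form_h(1,2)[OF h_compatible_fp[OF add.prems]]
    show ?case
      using add.IH[OF add.prems] A.linear_form_add[OF lin(1)] A.linear_form_add[OF lin(2)]
      by simp
  next
    case (scale x c)
    note lin = linear_form_h(1,2)[OF h_compatible_fp[OF scale.prems]]
    show ?case
      using scale.IH[OF scale.prems] A.linear_form_scale[OF lin(1)] A.linear_form_scale[OF lin(2)]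
      by simp
  next
    case (mult x x')
    show ?case by (rule h_eq_mult_fst[OF mult.prems mult.IH])
  qed
qed

end

abbreviation (input) fun_scale :: "'k::field \<Rightarrow> ('x \<Rightarrow> 'k) \<Rightarrow> 'x \<Rightarrow> 'k" where
  "fun_scale \<equiv> \<lambda>c g w. c * g w"

interpretation fun_space: vector_space fun_scale
  by unfold_locales (simp_all add: fun_eq_iff algebra_simps)

lemma linear_form_fun_diff:
  "linear_form fun_scale \<phi> \<Longrightarrow> \<phi> (\<lambda>w. f w - g w) = \<phi> f - \<phi> g"
  using fun_space.linear_form_diff[of \<phi> f g] by (simp add: fun_diff_def)

lemma linear_form_fun_sweedler:
  assumes "linear_form fun_scale \<phi>"
  shows "\<phi> (\<lambda>w. sweedler t (\<lambda>x y. G x y w)) = sweedler t (\<lambda>x y. \<phi> (G x y))"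
proof (induction t)
  case Nil then show ?case
    using fun_space.linear_form_zero[OF assms] by (simp add: zero_fun_def)
next
  case (Cons p t) then show ?case
    using fun_space.linear_form_add[OF assms] by (simp add: plus_fun_def)
qed

lemma wmul_mono: "wmul u (mono w) v = mono (u @ w @ v)"
proof
  fix x
  have decomp: "x = u @ w @ v" if "length u + length v \<le> length x" "take (length u) x = u"
    "drop (length x - length v) x = v" "drop (length u) (take (length x - length v) x) = w"
  proof -
    have "take (length u) (take (length x - length v) x) = u"
      using that(1,2) by (simp add: min_def) linarith
    then have "take (length x - length v) x = u @ w"
      using that(4) by (metis append_take_drop_id)
    then show ?thesis
      using that(3) by (metis append_assoc append_take_drop_id)
  qed
  show "wmul u (mono w) v x = mono (u @ w @ v) x"
  proof (cases "x = u @ w @ v")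
    case False
    then show ?thesis using decomp by (simp add: wmul_def mono_def) blast
  qed (simp add: wmul_def mono_def)
qed

lemma wmul_diff: "wmul u (\<lambda>w. f w - g w) v = (\<lambda>w. wmul u f v w - wmul u g v w)"
  and wmul_cmult: "wmul u (\<lambda>w. c * f w) v = (\<lambda>w. c * wmul u f v w)"
  by (auto simp: wmul_def fun_eq_iff)

lemma wmul_sweedler:
  "wmul u (\<lambda>w. sweedler t (\<lambda>x y. G x y w)) v = (\<lambda>w. sweedler t (\<lambda>x y. wmul u (G x y) v w))"
  by (induction t) (auto simp: wmul_def fun_eq_iff)

lemma fa_ideal_subspace: "fun_space.subspace (fa_ideal S)"
  unfolding fun_space.subspace_def
  by (auto simp: zero_fun_def plus_fun_def intro: fa_ideal.intros)

lemma fa_ideal_subset: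
  assumes "\<And>s u v. s \<in> S \<Longrightarrow> wmul u s v \<in> fa_ideal T"
  shows "fa_ideal S \<subseteq> fa_ideal T"
proof
  fix f assume "f \<in> fa_ideal S"
  then show "f \<in> fa_ideal T"
    by induction (auto intro: fa_ideal.intros assms)
qed

context skew_pairing
begin

abbreviation h_ideal :: "'a set \<Rightarrow> 'b set \<Rightarrow> (('a + 'b) list \<Rightarrow> 'k) set" where
  "h_ideal XA XB \<equiv> fa_ideal (fp_rels scA scB \<union> {hgen \<Delta>A \<Delta>B \<psi> a b | a b. a \<in> XA \<and> b \<in> XB})"

lemma functional_wmul_hgen:
  assumes \<phi>: "linear_form fun_scale \<phi>"
  shows "\<phi> (wmul u (hgen \<Delta>A \<Delta>B \<psi> a b) v)
       = h_left (\<lambda>w. \<phi> (mono (u @ w @ v))) a b - h_right (\<lambda>w. \<phi> (mono (u @ w @ v))) a b"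
proof -
  have "hgen \<Delta>A \<Delta>B \<psi> a b =
      (\<lambda>w. sweedler (\<Delta>A a) (\<lambda>a1 a2. sweedler (\<Delta>B b) (\<lambda>b1 b2. \<psi> a1 b1 * mono [Inr b2, Inl a2] w))
         - sweedler (\<Delta>A a) (\<lambda>a1 a2. sweedler (\<Delta>B b) (\<lambda>b1 b2. \<psi> a2 b2 * mono [Inl a1, Inr b1] w)))"
    by (simp add: hgen_def sweedler_def fun_eq_iff)
  then show ?thesis
    unfolding h_left_def h_right_def
    by (simp add: wmul_diff wmul_sweedler wmul_cmult wmul_mono linear_form_fun_diff[OF \<phi>]
        linear_form_fun_sweedler[OF \<phi>] fun_space.linear_form_scale[OF \<phi>])
qed

lemma h_compatible_functional:
  assumes \<phi>: "linear_form fun_scale \<phi>" and vanish: "\<forall>g\<in>h_ideal XA XB. \<phi> g = 0"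
  shows "h_compatible XA XB (\<lambda>w. \<phi> (mono w))"
proof -
  have kill: "\<phi> (wmul u s v) = 0"
    if "s \<in> fp_rels scA scB \<union> {hgen \<Delta>A \<Delta>B \<psi> a b | a b. a \<in> XA \<and> b \<in> XB}" for s u v
    using vanish fa_ideal.gen[OF that] by blast
  have rel2: "\<phi> (mono (u @ p @ v)) = \<phi> (mono (u @ q @ v))"
    if "(\<lambda>w. mono p w - mono q w) \<in> fp_rels scA scB" for u v p q
    using kill[of "\<lambda>w. mono p w - mono q w" u v] that
    by (simp add: wmul_diff wmul_mono linear_form_fun_diff[OF \<phi>])
  have rel3: "\<phi> (mono (u @ [r] @ v)) = c * \<phi> (mono (u @ [p] @ v)) + \<phi> (mono (u @ [q] @ v))"
    if "(\<lambda>w. mono [r] w - c * mono [p] w - mono [q] w) \<in> fp_rels scA scB" for u v r c p q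
    using kill[of "\<lambda>w. mono [r] w - c * mono [p] w - mono [q] w" u v] that
    by (simp add: wmul_diff wmul_cmult wmul_mono linear_form_fun_diff[OF \<phi>]
        fun_space.linear_form_scale[OF \<phi>])
      (simp add: algebra_simps)
  have "fp_compatible (\<lambda>w. \<phi> (mono w))"
    unfolding fp_compatible_def fp_relations_hold_def
    by (intro allI conjI rel2 rel3; unfold fp_rels_def; blast)
  moreover have "h_left (\<lambda>w. \<phi> (mono (u @ w @ v))) a b = h_right (\<lambda>w. \<phi> (mono (u @ w @ v))) a b"
    if "a \<in> XA" "b \<in> XB" for u v a b
    using kill[of "hgen \<Delta>A \<Delta>B \<psi> a b" u v] that functional_wmul_hgen[OF \<phi>] by auto
  ultimately show ?thesis
    unfolding h_compatible_def by simp
qed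

lemma hgen_mem_h_ideal:
  assumes genA: "alg_gen scA XA = UNIV" and genB: "alg_gen scB XB = UNIV"
    and span: "A.comult_in_span_tensor XA"
  shows "wmul u (hgen \<Delta>A \<Delta>B \<psi> a b) v \<in> h_ideal XA XB"
proof (rule ccontr)
  assume "wmul u (hgen \<Delta>A \<Delta>B \<psi> a b) v \<notin> h_ideal XA XB"
  then obtain \<phi> where \<phi>: "linear_form fun_scale \<phi>" and vanish: "\<forall>g\<in>h_ideal XA XB. \<phi> g = 0"
    and one: "\<phi> (wmul u (hgen \<Delta>A \<Delta>B \<psi> a b) v) = 1"
    using fun_space.separating_linear_form[OF fa_ideal_subspace] by blast
  have "h_compatible XA XB (\<lambda>w. \<phi> (mono (u @ w @ v)))"
    using h_compatible_context[OF h_compatible_functional[OF \<phi> vanish]] .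
  then have "\<phi> (wmul u (hgen \<Delta>A \<Delta>B \<psi> a b) v) = 0"
    using h_eq[OF genA genB span] functional_wmul_hgen[OF \<phi>] by simp
  with one show False by simp
qed

end

theorem lemma2p1p1:
  fixes scA :: "'k::field \<Rightarrow> 'a::ring_1 \<Rightarrow> 'a"
    and scB :: "'k \<Rightarrow> 'b::ring_1 \<Rightarrow> 'b"
    and \<Delta>A :: "'a \<Rightarrow> ('a \<times> 'a) list" and \<epsilon>A :: "'a \<Rightarrow> 'k" and \<sigma>A :: "'a \<Rightarrow> 'a"
    and \<Delta>B :: "'b \<Rightarrow> ('b \<times> 'b) list" and \<epsilon>B :: "'b \<Rightarrow> 'k" and \<sigma>B :: "'b \<Rightarrow> 'b"
    and \<psi> :: "'a \<Rightarrow> 'b \<Rightarrow> 'k"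
    and XA :: "'a set" and XB :: "'b set"
  assumes "hopf_algebra scA \<Delta>A \<epsilon>A \<sigma>A"
    and "hopf_algebra scB \<Delta>B \<epsilon>B \<sigma>B"
    and "bij \<sigma>B"
    and "skew_hopf_pairing scA \<Delta>A \<epsilon>A \<sigma>A scB \<Delta>B \<epsilon>B \<sigma>B \<psi>"
    and "alg_gen scA XA = UNIV"
    and "alg_gen scB XB = UNIV"
    and "\<forall>x\<in>XA. \<exists>t. tensor_eq2 scA (\<Delta>A x) t \<and>
            (\<forall>(u,v)\<in>set t. u \<in> module.span scA XA \<and> v \<in> module.span scA XA)"
    and "\<forall>x\<in>XB. \<exists>t. tensor_eq2 scB (\<Delta>B x) t \<and>
            (\<forall>(u,v)\<in>set t. u \<in> module.span scB XB \<and> v \<in> module.span scB XB)"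
  shows "fa_ideal (fp_rels scA scB \<union> {hgen \<Delta>A \<Delta>B \<psi> a b | a b. True})
       = fa_ideal (fp_rels scA scB \<union> {hgen \<Delta>A \<Delta>B \<psi> a b | a b. a \<in> XA \<and> b \<in> XB})"
proof -
  interpret skew_pairing scA \<Delta>A \<epsilon>A \<sigma>A scB \<Delta>B \<epsilon>B \<sigma>B \<psi>
    using assms(1,2,4) by (simp add: skew_pairing_def skew_pairing_axioms_def hopf_def)
  have "A.comult_in_span_tensor XA"
    using assms(7) unfolding A.comult_in_span_tensor_def .
  then have "wmul u (hgen \<Delta>A \<Delta>B \<psi> a b) v \<in> h_ideal XA XB" for u v a b
    using hgen_mem_h_ideal assms(5,6) by blast
  then show ?thesis
    by (intro antisym fa_ideal_subset) (auto intro: fa_ideal.gen)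
qed

end
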